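(* In the stochastic approximation setting described in the context (with $\mu>0$ chosen so that $\alpha_2>0$), for all $k\ge0$, $$\mathbb{E}[M(x_{k+1}-x^* )\mid\mathcal F_k]\le(1-2\alpha_2\epsilon_k+\alpha_3\epsilon_k^2)M(x_k-x^* )+\frac{\alpha_4(A+2B\|x^*\|_c^2)}{2(1+\mu/\ell_{cs}^2)}\epsilon_k^2.$$
   Context: Let $\|\cdot\|_c,\|\cdot\|_e$ be arbitrary norms on $\mathbb{R}^d$. Let $\mathcal H:\mathbb{R}^d\to\mathbb{R}^d$ satisfy $\|\mathcal H(x)-\mathcal H(y)\|_c\le\gamma\|x-y\|_c$ for all $x,y$, for some $\gamma\in(0,1)$, and let $x^*$ be its unique fixed point. Fix a deterministic $x_0\in\mathbb{R}^d$ and define $x_{k+1}=x_k+\epsilon_k(\mathcal H(x_k)-x_k+w_k)$, where $\{w_k\}$ are random vectors such that, letting $\mathcal F_k$ be the $\sigma$-algebra generated by $x_0,w_0,\dots,x_{k-1},w_{k-1},x_k$, for all $k\ge0$: $\mathbb{E}[w_k\mid\mathcal F_k]=0$ and $\mathbb{E}[\|w_k\|_e^2\mid\mathcal F_k]\le A+B\|x_k\|_e^2$ for constants $A,B>0$. The stepsizes $\{\epsilon_k\}$ are positive and non-increasing. A convex differentiable $h$ is $L$-smooth w.r.t. a norm $\|\cdot\|$ if $h(y)\le h(x)+\langle\nabla h(x),y-x\rangle+\frac L2\|x-y\|^2$ for all $x,y$. Let $\|\cdot\|_s$ be a norm such that $g(x)=\frac12\|x\|_s^2$ is $L$-smooth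 w.r.t. $\|\cdot\|_s$, and let $\ell_{cs},\ell_{es}\in(0,1]$, $u_{cs},u_{es}\in[1,\infty)$ satisfy $\ell_{cs}\|x\|_c\le\|x\|_s\le u_{cs}\|x\|_c$ and $\ell_{es}\|x\|_e\le\|x\|_s\le u_{es}\|x\|_e$ for all $x$. Let $f(x)=\frac12\|x\|_c^2$ and, for $\mu>0$, $M(x)=\min_{u\in\mathbb{R}^d}\{f(u)+\frac1\mu g(x-u)\}$. Define $\alpha_1=\frac{1+\mu/\ell_{cs}^2}{1+\mu/u_{cs}^2}$, $\alpha_2=1-\gamma\alpha_1^{1/2}$, $\alpha_3=\frac{4u_{cs}^2u_{es}^2(B+2)L(\ell_{cs}^2+\mu)}{\mu\ell_{cs}^2\ell_{es}^2}$, $\alpha_4=\frac{\alpha_3}{2(B+2)}$; $\mu$ is chosen so that $\alpha_2>0$. *)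

theory Defs
  imports "HOL-Analysis.Analysis" "HOL-Probability.Probability"
begin

definition is_norm :: "('a::real_vector \<Rightarrow> real) \<Rightarrow> bool" where
  "is_norm N \<longleftrightarrow> (\<forall>x. N x = 0 \<longleftrightarrow> x = 0) \<and> (\<forall>a x. N (a *\<^sub>R x) = \<bar>a\<bar> * N x)
     \<and> (\<forall>x y. N (x + y) \<le> N x + N y)"

definition L_smooth :: "('a::euclidean_space \<Rightarrow> real) \<Rightarrow> ('a \<Rightarrow> real) \<Rightarrow> real \<Rightarrow> bool" where
  "L_smooth h N L \<longleftrightarrow> convex_on UNIV h \<and>
     (\<exists>grad. (\<forall>x. (h has_derivative (\<lambda>v. grad x \<bullet> v)) (at x)) \<and>
        (\<forall>x y. h y \<le> h x + grad x \<bullet> (y - x) + L / 2 * (N (x - y))\<^sup>2))"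

definition moreau :: "('a \<Rightarrow> real) \<Rightarrow> ('a \<Rightarrow> real) \<Rightarrow> real \<Rightarrow> 'a::ab_group_add \<Rightarrow> real" where
  "moreau Nc Ns \<mu> x = (INF u. (1/2) * (Nc u)\<^sup>2 + (1/\<mu>) * ((1/2) * (Ns (x - u))\<^sup>2))"

definition hist :: "'w measure \<Rightarrow> (nat \<Rightarrow> 'w \<Rightarrow> 'b::topological_space) \<Rightarrow> (nat \<Rightarrow> 'w \<Rightarrow> 'b) \<Rightarrow> nat \<Rightarrow> 'w measure" where
  "hist M x w k = sigma (space M)
     ({x i -` B \<inter> space M | i B. i \<le> k \<and> B \<in> sets borel} \<union>
      {w i -` B \<inter> space M | i B. i < k \<and> B \<in> sets borel})"

end

theory Submission
  imports Defs
begin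

(*
  M is a smooth convex surrogate of Nc^2/2: it is 2-homogeneous, it is squeezed between
  Nc^2 / (2 (1 + mu/lcs^2)) and Nc^2 / (2 (1 + mu/ucs^2)), and it inherits from Ns^2/2 an upper
  quadratic bound with constant L/mu w.r.t. Ns.  Expanding M at the new error
  z + eps (H(x_k) - x* - z + w_k), z = x_k - x*, to first order plus this quadratic remainder:
  by Euler's identity <grad M(z), z> = 2 M(z) and the squeeze applied to the contraction H, the drift
  term is at most -2 (1 - gamma sqrt alpha_1) M(z); the noise term has zero conditional mean; and the
  remainder is controlled by the conditional variance bound and the norm equivalences.
*)

section \<open>Norms given as functions\<close>

lemma is_norm_eq_0_iff: "is_norm N \<Longrightarrow> N x = 0 \<longleftrightarrow> x = 0"
  unfolding is_norm_def by blast

lemma is_norm_scaleR: "is_norm N \<Longrightarrow> N (a *\<^sub>R x) = \<bar>a\<bar> * N x"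
  unfolding is_norm_def by blast

lemma is_norm_triangle: "is_norm N \<Longrightarrow> N (x + y) \<le> N x + N y"
  unfolding is_norm_def by blast

lemma is_norm_zero: "is_norm N \<Longrightarrow> N 0 = 0"
  by (simp add: is_norm_eq_0_iff)

lemma is_norm_minus: "is_norm N \<Longrightarrow> N (- x) = N x"
  using is_norm_scaleR[of N "-1" x] by simp

lemma is_norm_nonneg:
  assumes "is_norm N" shows "0 \<le> N x"
  using is_norm_triangle[OF assms, of x "- x"] is_norm_minus[OF assms, of x] is_norm_zero[OF assms]
  by simp

lemma is_norm_commute: "is_norm N \<Longrightarrow> N (x - y) = N (y - x)"
  using is_norm_minus[of N "x - y"] by simp

lemma is_norm_diff_le: "is_norm N \<Longrightarrow> N (x - y) \<le> N x + N y"
  using is_norm_triangle[of N x "- y"] is_norm_minus[of N y] by simp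

lemma square_add_le: "(a + b)\<^sup>2 \<le> 2 * a\<^sup>2 + 2 * (b::real)\<^sup>2"
  using sum_squares_bound[of a b] by (simp add: power2_sum)

lemma is_norm_sq_le:
  assumes "is_norm N" "N x \<le> c" shows "(N x)\<^sup>2 \<le> c\<^sup>2"
  using assms is_norm_nonneg[OF assms(1), of x] by (intro power_mono) auto

lemma is_norm_add_sq_le:
  assumes "is_norm N" shows "(N (x + y))\<^sup>2 \<le> 2 * (N x)\<^sup>2 + 2 * (N y)\<^sup>2"
  using is_norm_sq_le[OF assms is_norm_triangle[OF assms]] square_add_le order_trans by blast

lemma is_norm_convex:
  assumes "is_norm N" shows "convex_on UNIV N"
proof (rule convex_onI)
  fix t :: real and x y :: 'a assume t: "0 < t" "t < 1"
  have "N ((1 - t) *\<^sub>R x + t *\<^sub>R y) \<le> N ((1 - t) *\<^sub>R x) + N (t *\<^sub>R y)"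
    by (rule is_norm_triangle[OF assms])
  also have "\<dots> = (1 - t) * N x + t * N y"
    using t by (simp add: is_norm_scaleR[OF assms])
  finally show "N ((1 - t) *\<^sub>R x + t *\<^sub>R y) \<le> (1 - t) * N x + t * N y" .
qed simp

lemma is_norm_continuous:
  fixes N :: "'a::euclidean_space \<Rightarrow> real"
  assumes "is_norm N" shows "continuous_on UNIV N"
  by (rule convex_on_continuous[OF open_UNIV is_norm_convex[OF assms]])

lemma is_norm_borel_measurable:
  fixes N :: "'a::euclidean_space \<Rightarrow> real"
  assumes "is_norm N" shows "N \<in> borel_measurable borel"
  by (rule borel_measurable_continuous_onI[OF is_norm_continuous[OF assms]])

text \<open>The constant is the minimum of \<open>N\<close> on the Euclidean unit sphere.\<close>
lemma is_norm_bounded_below: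
  fixes N :: "'a::euclidean_space \<Rightarrow> real"
  assumes "is_norm N" shows "\<exists>m>0. \<forall>x. m * norm x \<le> N x"
proof -
  have "continuous_on (sphere 0 1) N"
    using is_norm_continuous[OF assms] continuous_on_subset by blast
  then obtain z where z: "z \<in> sphere (0::'a) 1" "\<And>y. y \<in> sphere 0 1 \<Longrightarrow> N z \<le> N y"
    using continuous_attains_inf[of "sphere (0::'a) 1" N] by auto
  have "z \<noteq> 0" using z by auto
  then have pos: "0 < N z"
    using is_norm_eq_0_iff[OF assms, of z] is_norm_nonneg[OF assms, of z] by auto
  have "N z * norm x \<le> N x" for x
  proof (cases "x = 0")
    case False
    have "N z \<le> N ((1 / norm x) *\<^sub>R x)" using z(2)[of "(1 / norm x) *\<^sub>R x"] False by simp
    also have "\<dots> = N x / norm x" by (simp add: is_norm_scaleR[OF assms])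
    finally show ?thesis using False by (simp add: field_simps)
  qed (simp add: is_norm_zero[OF assms])
  with pos show ?thesis by blast
qed

lemma lipschitz_is_norm_continuous:
  fixes H :: "'a::euclidean_space \<Rightarrow> 'a"
  assumes N: "is_norm N" and lip: "\<And>u v. N (H u - H v) \<le> \<gamma> * N (u - v)"
  shows "continuous_on UNIV H"
proof -
  obtain m where m: "0 < m" "\<And>u. m * norm u \<le> N u" using is_norm_bounded_below[OF N] by blast
  have cN: "isCont N 0"
    using is_norm_continuous[OF N] continuous_on_eq_continuous_at by blast
  have "H \<midarrow>x\<rightarrow> H x" for x
  proof -
    have "((\<lambda>y. y - x) \<longlongrightarrow> 0) (at x)"
      using tendsto_diff[OF tendsto_ident_at tendsto_const, of x x] by simp
    then have "((\<lambda>y. N (y - x)) \<longlongrightarrow> 0) (at x)"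
      using isCont_tendsto_compose[OF cN] is_norm_zero[OF N] by fastforce
    then have "((\<lambda>y. \<gamma> * N (y - x) / m) \<longlongrightarrow> 0) (at x)"
      by (intro tendsto_divide_zero tendsto_mult_right_zero)
    moreover have "\<forall>\<^sub>F y in at x. norm (H y - H x) \<le> \<gamma> * N (y - x) / m"
    proof (intro always_eventually allI)
      fix y
      have "m * norm (H y - H x) \<le> \<gamma> * N (y - x)"
        using m(2)[of "H y - H x"] lip[of y x] by linarith
      then show "norm (H y - H x) \<le> \<gamma> * N (y - x) / m"
        using m(1) by (simp add: pos_le_divide_eq mult.commute)
    qed
    ultimately have "((\<lambda>y. H y - H x) \<longlongrightarrow> 0) (at x)"
      by (rule Lim_null_comparison[rotated])
    then show ?thesis by (rule LIM_zero_cancel)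
  qed
  then show ?thesis by (simp add: continuous_on_eq_continuous_at isCont_def)
qed

section \<open>Convex functions with a quadratic upper bound\<close>

text \<open>Convexity at \<open>x \<plusminus> t (z - x)\<close> together with the upper bound at \<open>x - t (z - x)\<close> gives the
  subgradient inequality up to an error \<open>O(t)\<close>; let \<open>t \<rightarrow> 0\<close>.\<close>
lemma convex_quadratic_upper_imp_subgradient:
  fixes f :: "'a::real_inner \<Rightarrow> real"
  assumes cvx: "convex_on UNIV f"
    and upper: "\<And>z. f z \<le> f x + v \<bullet> (z - x) + K * (N (z - x))\<^sup>2"
    and hom: "\<And>t z. N (t *\<^sub>R z) = \<bar>t\<bar> * N z"
  shows "f x + v \<bullet> (z - x) \<le> f z"
proof -
  define d where "d = z - x"
  define C where "C = K * (N d)\<^sup>2"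
  have approx: "f x + v \<bullet> d \<le> f z + t * C" if t: "0 < t" "t < 1" for t
  proof -
    have "(1 - 1/2) *\<^sub>R (x + t *\<^sub>R d) + (1/2) *\<^sub>R (x - t *\<^sub>R d) = x"
      by (simp add: algebra_simps flip: scaleR_add_left)
    then have mid: "f x \<le> (1 - 1/2) * f (x + t *\<^sub>R d) + (1/2) * f (x - t *\<^sub>R d)"
      using convex_onD[OF cvx, of "1/2" "x + t *\<^sub>R d" "x - t *\<^sub>R d"] by simp
    have minus_step: "f (x - t *\<^sub>R d) \<le> f x - t * (v \<bullet> d) + t\<^sup>2 * C"
      using upper[of "x - t *\<^sub>R d"] hom[of "- t" d] t
      by (simp add: C_def power_mult_distrib inner_scaleR_right mult_ac)
    have plus_step: "f (x + t *\<^sub>R d) \<le> (1 - t) * f x + t * f z"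
      using convex_onD[OF cvx, of t x z] t by (simp add: d_def algebra_simps)
    have "t * (f x + v \<bullet> d) \<le> t * (f z + t * C)"
      using mid minus_step plus_step by (simp add: algebra_simps power2_eq_square)
    then show ?thesis using t by simp
  qed
  have "((\<lambda>t. f z + t * C) \<longlongrightarrow> f z + 0 * C) (at_right 0)"
    by (intro tendsto_intros)
  moreover have "\<forall>\<^sub>F t in at_right 0. f x + v \<bullet> d \<le> f z + t * C"
    using approx by (intro eventually_at_rightI[of 0 1]) auto
  ultimately have "f x + v \<bullet> d \<le> f z + 0 * C"
    by (intro tendsto_lowerbound) auto
  then show ?thesis by (simp add: d_def)
qed

lemma subgradient_inner_self_of_2_homogeneous:
  fixes f :: "'a::real_inner \<Rightarrow> real"
  assumes sub: "\<And>z. f x + v \<bullet> (z - x) \<le> f z"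
    and hom: "\<And>t. f (t *\<^sub>R x) = t\<^sup>2 * f x" and nonneg: "0 \<le> f x"
  shows "v \<bullet> x = 2 * f x"
proof -
  define s where "s = (v \<bullet> x - 2 * f x) / (2 * f x + 1)"
  have vx: "v \<bullet> x = 2 * f x + s * (2 * f x + 1)"
    using nonneg by (simp add: s_def field_simps)
  have "f x + v \<bullet> ((1 + s) *\<^sub>R x - x) \<le> f ((1 + s) *\<^sub>R x)" by (rule sub)
  moreover have "(1 + s) *\<^sub>R x - x = s *\<^sub>R x" by (simp add: algebra_simps)
  ultimately have "f x + s * (v \<bullet> x) \<le> (1 + s)\<^sup>2 * f x"
    by (simp only: hom inner_scaleR_right)
  then have "s\<^sup>2 * (f x + 1) \<le> 0"
    unfolding vx by (simp add: power2_eq_square algebra_simps)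
  then have "s = 0"
    using nonneg by (smt (verit) mult_pos_pos zero_less_power2)
  then show ?thesis using vx by simp
qed

lemma subgradient_inner_le_of_2_homogeneous:
  fixes f :: "'a::real_inner \<Rightarrow> real"
  assumes sub: "\<And>z. f x + v \<bullet> (z - x) \<le> f z"
    and hom: "\<And>t. f (t *\<^sub>R y) = t\<^sup>2 * f y" and euler: "v \<bullet> x = 2 * f x"
    and le: "f y \<le> c\<^sup>2 * f x" and c: "0 < c"
  shows "v \<bullet> y \<le> 2 * c * f x"
proof -
  have "f x + v \<bullet> ((1/c) *\<^sub>R y - x) \<le> f ((1/c) *\<^sub>R y)" by (rule sub)
  also have "\<dots> = f y / c\<^sup>2" using hom[of "1/c"] by (simp add: power_divide)
  also have "\<dots> \<le> f x" using le c by (simp add: field_simps)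
  finally have "(1/c) * (v \<bullet> y) \<le> 2 * f x" using euler by (simp add: inner_diff_right)
  then show ?thesis using c by (simp add: field_simps)
qed

lemma difference_quotient_tendsto_of_subgradient:
  fixes f :: "'a::real_inner \<Rightarrow> real"
  assumes upper: "\<And>z. f z \<le> f x + v \<bullet> (z - x) + K * (N (z - x))\<^sup>2"
    and sub: "\<And>z. f x + v \<bullet> (z - x) \<le> f z"
    and hom: "\<And>t z. N (t *\<^sub>R z) = \<bar>t\<bar> * N z"
  shows "(\<lambda>n. real (Suc n) * (f (x + (1 / real (Suc n)) *\<^sub>R e) - f x)) \<longlonglongrightarrow> v \<bullet> e"
proof (rule tendsto_sandwich)
  let ?q = "\<lambda>n. real (Suc n) * (f (x + (1 / real (Suc n)) *\<^sub>R e) - f x)"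
  have bounds: "v \<bullet> e \<le> ?q n \<and> ?q n \<le> v \<bullet> e + K * (N e)\<^sup>2 / real (Suc n)" for n
  proof -
    define h where "h = 1 / real (Suc n)"
    define \<Delta> where "\<Delta> = f (x + h *\<^sub>R e) - f x"
    have h: "0 < h" and q: "?q n = \<Delta> / h" by (simp_all add: h_def \<Delta>_def)
    have "h * (v \<bullet> e) \<le> \<Delta>"
      using sub[of "x + h *\<^sub>R e"] by (simp add: \<Delta>_def)
    moreover have "\<Delta> \<le> h * (v \<bullet> e + h * (K * (N e)\<^sup>2))"
      using upper[of "x + h *\<^sub>R e"] hom[of h e] h
      by (simp add: \<Delta>_def power_mult_distrib power2_eq_square algebra_simps)
    moreover have "h * (K * (N e)\<^sup>2) = K * (N e)\<^sup>2 / real (Suc n)" by (simp add: h_def)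
    ultimately show ?thesis
      using h unfolding q by (simp add: pos_le_divide_eq pos_divide_le_eq mult.commute)
  qed
  show "\<forall>\<^sub>F n in sequentially. v \<bullet> e \<le> ?q n"
    using bounds by (simp add: always_eventually)
  show "\<forall>\<^sub>F n in sequentially. ?q n \<le> v \<bullet> e + K * (N e)\<^sup>2 / real (Suc n)"
    using bounds by (simp add: always_eventually)
  show "(\<lambda>n. v \<bullet> e) \<longlonglongrightarrow> v \<bullet> e" by simp
  have "(\<lambda>n. K * (N e)\<^sup>2 / real (Suc n)) \<longlonglongrightarrow> 0"
    by (intro tendsto_divide_0[OF tendsto_const] filterlim_real_sequentially[THEN
          filterlim_compose[OF _ filterlim_Suc]] filterlim_at_top_imp_at_infinity)
  then show "(\<lambda>n. v \<bullet> e + K * (N e)\<^sup>2 / real (Suc n)) \<longlonglongrightarrow> v \<bullet> e"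
    using tendsto_add[of "\<lambda>_. v \<bullet> e" "v \<bullet> e"] by fastforce
qed

section \<open>The generalized Moreau envelope\<close>

lemma square_convex_combination_le:
  fixes t p q z :: real
  assumes "0 \<le> t" "t \<le> 1" "0 \<le> z" "z \<le> (1 - t) * p + t * q"
  shows "z\<^sup>2 \<le> (1 - t) * p\<^sup>2 + t * q\<^sup>2"
proof -
  have "z\<^sup>2 \<le> ((1 - t) * p + t * q)\<^sup>2" using assms by (intro power_mono) auto
  also have "\<dots> = (1 - t) * p\<^sup>2 + t * q\<^sup>2 - (1 - t) * t * (p - q)\<^sup>2"
    by (simp add: power2_eq_square algebra_simps)
  also have "\<dots> \<le> (1 - t) * p\<^sup>2 + t * q\<^sup>2" using assms by simp
  finally show ?thesis .
qed

locale moreau_env =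
  fixes Nc Ns :: "'a::euclidean_space \<Rightarrow> real" and \<mu> lcs ucs :: real
  assumes nc: "is_norm Nc" and ns: "is_norm Ns" and mu: "0 < \<mu>"
    and lcs: "0 < lcs" and ucs: "0 < ucs"
    and equiv: "\<And>v. lcs * Nc v \<le> Ns v \<and> Ns v \<le> ucs * Nc v"
begin

abbreviation env :: "'a \<Rightarrow> real" where "env \<equiv> moreau Nc Ns \<mu>"

definition env_obj :: "'a \<Rightarrow> 'a \<Rightarrow> real" where
  "env_obj x u = (1/2) * (Nc u)\<^sup>2 + (1/\<mu>) * ((1/2) * (Ns (x - u))\<^sup>2)"

definition alpha1 :: real where
  "alpha1 = (1 + \<mu> / lcs\<^sup>2) / (1 + \<mu> / ucs\<^sup>2)"

lemma alpha1_pos: "0 < alpha1"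
  unfolding alpha1_def using mu by (intro divide_pos_pos add_pos_nonneg) auto

lemma moreau_eq_INF: "env x = (INF u. env_obj x u)"
  unfolding moreau_def env_obj_def by simp

lemma env_obj_nonneg: "0 \<le> env_obj x u"
  unfolding env_obj_def using mu by simp

lemma moreau_le_env_obj: "env x \<le> env_obj x u"
  unfolding moreau_eq_INF
  by (rule cINF_lower) (auto intro: bdd_belowI[of _ 0] simp: env_obj_nonneg)

lemma moreau_greatest: "(\<And>u. c \<le> env_obj x u) \<Longrightarrow> c \<le> env x"
  unfolding moreau_eq_INF by (rule cINF_greatest) auto

lemma moreau_nonneg: "0 \<le> env x"
  using moreau_greatest env_obj_nonneg by blast

lemma moreau_le_half_Nc_sq: "env x \<le> (1/2) * (Nc x)\<^sup>2"
  using moreau_le_env_obj[of x x] by (simp add: env_obj_def is_norm_zero[OF ns])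

lemma continuous_env_obj: "continuous_on UNIV (env_obj x)"
proof -
  have "continuous_on UNIV (\<lambda>u. Ns (x - u))"
    by (rule continuous_on_compose2[OF is_norm_continuous[OF ns]]) (auto intro!: continuous_intros)
  then show ?thesis
    unfolding env_obj_def by (intro continuous_intros is_norm_continuous[OF nc]) auto
qed

text \<open>The objective is coercive: outside a ball whose radius is fixed by its value at \<open>u = 0\<close>
  it exceeds that value, so its minimum over the (compact) ball is global.\<close>
lemma moreau_attained: "\<exists>u. env x = env_obj x u"
proof -
  obtain m where m: "0 < m" "\<And>u. m * norm u \<le> Nc u"
    using is_norm_bounded_below[OF nc] by blast
  define R where "R = env_obj x 0"
  define r where "r = sqrt (2 * R) / m"
  have R: "0 \<le> R" unfolding R_def by (rule env_obj_nonneg)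
  have "continuous_on (cball 0 r) (env_obj x)"
    using continuous_env_obj continuous_on_subset by blast
  moreover have "0 \<le> r" unfolding r_def using R m(1) by (intro divide_nonneg_pos) auto
  then have "cball (0::'a) r \<noteq> {}" by simp
  ultimately obtain z where z: "z \<in> cball 0 r" "\<And>y. y \<in> cball 0 r \<Longrightarrow> env_obj x z \<le> env_obj x y"
    using continuous_attains_inf[of "cball (0::'a) r" "env_obj x"] by auto
  have zR: "env_obj x z \<le> R" using z(2)[of 0] R m by (simp add: R_def r_def)
  have "env_obj x z \<le> env_obj x u" for u
  proof (cases "u \<in> cball 0 r")
    case False
    then have "sqrt (2 * R) < m * norm u" using m by (simp add: r_def field_simps)
    then have "sqrt (2 * R) < Nc u" using m(2)[of u] by linarith
    then have "(sqrt (2 * R))\<^sup>2 < (Nc u)\<^sup>2" using R by (intro power_strict_mono) auto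
    then have "R < (1/2) * (Nc u)\<^sup>2" using R by simp
    moreover have "0 \<le> (1/\<mu>) * ((1/2) * (Ns (x - u))\<^sup>2)" using mu by simp
    ultimately show ?thesis using zR unfolding env_obj_def by linarith
  qed (use z in blast)
  then have "env x = env_obj x z"
    using moreau_le_env_obj[of x z] moreau_greatest[of "env_obj x z" x] by (simp add: antisym)
  then show ?thesis by blast
qed

lemma env_obj_scaleR: "env_obj (t *\<^sub>R x) (t *\<^sub>R u) = t\<^sup>2 * env_obj x u"
proof -
  have diff: "t *\<^sub>R x - t *\<^sub>R u = t *\<^sub>R (x - u)" by (simp add: scaleR_diff_right)
  show ?thesis
    unfolding env_obj_def diff is_norm_scaleR[OF nc] is_norm_scaleR[OF ns]
    by (simp add: power_mult_distrib algebra_simps)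
qed

lemma moreau_scaleR: "env (t *\<^sub>R x) = t\<^sup>2 * env x"
proof (cases "t = 0")
  case True
  then show ?thesis
    using moreau_le_half_Nc_sq[of 0] moreau_nonneg[of 0] by (simp add: is_norm_zero[OF nc])
next
  case False
  obtain u where u: "env x = env_obj x u" using moreau_attained by blast
  obtain u' where u': "env (t *\<^sub>R x) = env_obj (t *\<^sub>R x) u'" using moreau_attained by blast
  have "env (t *\<^sub>R x) \<le> t\<^sup>2 * env x"
    using moreau_le_env_obj[of "t *\<^sub>R x" "t *\<^sub>R u"] u by (simp add: env_obj_scaleR)
  moreover have "t\<^sup>2 * env x \<le> env (t *\<^sub>R x)"
    using mult_left_mono[OF moreau_le_env_obj[of x "(1/t) *\<^sub>R u'"], of "t\<^sup>2"]
      env_obj_scaleR[of t x "(1/t) *\<^sub>R u'"] u' False by simp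
  ultimately show ?thesis by simp
qed

lemma Nc_sq_le_moreau: "(Nc x)\<^sup>2 \<le> 2 * (1 + \<mu> / lcs\<^sup>2) * env x"
proof -
  define b where "b = lcs\<^sup>2 / \<mu>"
  have b: "0 < b" using lcs mu by (simp add: b_def)
  have D: "1 + \<mu> / lcs\<^sup>2 = (1 + b) / b" using lcs mu by (simp add: b_def field_simps)
  have "b * (Nc x)\<^sup>2 \<le> (1 + b) * (2 * env_obj x u)" for u
  proof -
    define p where "p = Nc u"
    define q where "q = Nc (x - u)"
    have "(lcs * q)\<^sup>2 \<le> (Ns (x - u))\<^sup>2"
      using equiv[of "x - u"] lcs is_norm_nonneg[OF nc, of "x - u"] by (intro power_mono) (auto simp: q_def)
    then have "p\<^sup>2 + b * q\<^sup>2 \<le> 2 * env_obj x u"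
      using mu by (simp add: env_obj_def p_def b_def power_mult_distrib field_simps)
    moreover have "(Nc x)\<^sup>2 \<le> (p + q)\<^sup>2"
      using is_norm_sq_le[OF nc is_norm_triangle[OF nc, of u "x - u"]] by (simp add: p_def q_def)
    moreover have "b * (p + q)\<^sup>2 \<le> (1 + b) * (p\<^sup>2 + b * q\<^sup>2)"
      using zero_le_power2[of "p - b * q"] by (simp add: power2_eq_square algebra_simps)
    ultimately show ?thesis
      using b by (smt (verit) mult_left_mono)
  qed
  then have "b * (Nc x)\<^sup>2 / (2 * (1 + b)) \<le> env x"
    using b by (intro moreau_greatest) (simp add: field_simps)
  then show ?thesis using b unfolding D by (simp add: field_simps)
qed

text \<open>The competitor is \<open>u = s x\<close> with \<open>s = a / (1 + a)\<close>, \<open>a = ucs\<^sup>2 / \<mu>\<close>, which balances the two terms.\<close>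
lemma moreau_le_Nc_sq: "2 * (1 + \<mu> / ucs\<^sup>2) * env y \<le> (Nc y)\<^sup>2"
proof -
  define a where "a = ucs\<^sup>2 / \<mu>"
  have a: "0 < a" using ucs mu by (simp add: a_def)
  define s where "s = a / (1 + a)"
  have s: "0 \<le> s" "s \<le> 1" "1 - s = 1 / (1 + a)" using a by (auto simp: s_def field_simps)
  have "Ns ((1 - s) *\<^sub>R y) \<le> (1 - s) * (ucs * Nc y)"
    using equiv[of y] s(1,2) by (simp add: is_norm_scaleR[OF ns] mult_left_mono)
  then have "(Ns ((1 - s) *\<^sub>R y))\<^sup>2 \<le> ((1 - s) * (ucs * Nc y))\<^sup>2"
    by (rule is_norm_sq_le[OF ns])
  moreover have "y - s *\<^sub>R y = (1 - s) *\<^sub>R y" by (simp add: algebra_simps)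
  ultimately have "env_obj y (s *\<^sub>R y) \<le> (1/2) * (s * Nc y)\<^sup>2 + (1/\<mu>) * ((1/2) * ((1 - s) * (ucs * Nc y))\<^sup>2)"
    unfolding env_obj_def using mu s(1,2) by (intro add_mono mult_left_mono) (auto simp: is_norm_scaleR[OF nc])
  also have "\<dots> = (1/2) * (Nc y)\<^sup>2 * (s\<^sup>2 + (1 - s)\<^sup>2 * a)"
    using mu by (simp add: a_def power_mult_distrib power2_eq_square field_simps)
  also have "s\<^sup>2 + (1 - s)\<^sup>2 * a = a * (1 + a) / (1 + a)\<^sup>2"
    unfolding s(3) by (simp add: s_def power_divide add_divide_distrib power2_eq_square algebra_simps)
  also have "\<dots> = a / (1 + a)"
    using a by (simp add: power2_eq_square)
  also have "a / (1 + a) = 1 / (1 + \<mu> / ucs\<^sup>2)"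
    using ucs mu by (simp add: a_def field_simps)
  finally have "env y \<le> (1/2) * (Nc y)\<^sup>2 / (1 + \<mu> / ucs\<^sup>2)"
    using moreau_le_env_obj[of y "s *\<^sub>R y"] by simp
  moreover have D: "0 < 1 + \<mu> / ucs\<^sup>2" using mu by (simp add: add_pos_nonneg)
  ultimately have "env y * (1 + \<mu> / ucs\<^sup>2) \<le> (1/2) * (Nc y)\<^sup>2"
    using pos_le_divide_eq[OF D] by blast
  then show ?thesis by (simp only: mult_ac)
qed

lemma moreau_le_of_Nc_le:
  assumes "Nc h \<le> \<gamma> * Nc z" "0 \<le> \<gamma>"
  shows "env h \<le> \<gamma>\<^sup>2 * alpha1 * env z"
proof -
  have D: "0 < 1 + \<mu> / ucs\<^sup>2" using mu by (simp add: add_pos_nonneg)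
  have "2 * (1 + \<mu> / ucs\<^sup>2) * env h \<le> (\<gamma> * Nc z)\<^sup>2"
    using moreau_le_Nc_sq[of h] is_norm_sq_le[OF nc assms(1)] by linarith
  also have "\<dots> \<le> \<gamma>\<^sup>2 * (2 * (1 + \<mu> / lcs\<^sup>2) * env z)"
    using Nc_sq_le_moreau[of z] by (simp add: power_mult_distrib mult_left_mono)
  finally have "2 * ((1 + \<mu> / ucs\<^sup>2) * env h) \<le> 2 * ((1 + \<mu> / lcs\<^sup>2) * \<gamma>\<^sup>2 * env z)"
    by (simp only: mult_ac)
  then have "(1 + \<mu> / ucs\<^sup>2) * env h \<le> (1 + \<mu> / lcs\<^sup>2) * \<gamma>\<^sup>2 * env z"
    by linarith
  then show ?thesis
    using D by (simp add: alpha1_def pos_le_divide_eq mult_ac)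
qed

lemma convex_moreau: "convex_on UNIV env"
proof (rule convex_onI)
  fix t :: real and a b :: 'a assume t: "0 < t" "t < 1"
  obtain ua where ua: "env a = env_obj a ua" using moreau_attained by blast
  obtain ub where ub: "env b = env_obj b ub" using moreau_attained by blast
  define u where "u = (1 - t) *\<^sub>R ua + t *\<^sub>R ub"
  define p where "p = (1 - t) *\<^sub>R a + t *\<^sub>R b"
  have conv: "N ((1 - t) *\<^sub>R y + t *\<^sub>R z) \<le> (1 - t) * N y + t * N z" if "is_norm N" for N :: "'a \<Rightarrow> real" and y z
    using convex_onD[OF is_norm_convex[OF that], of t y z] t by simp
  have "p - u = (1 - t) *\<^sub>R (a - ua) + t *\<^sub>R (b - ub)"
    by (simp add: p_def u_def algebra_simps)
  then have Ns_sq: "(Ns (p - u))\<^sup>2 \<le> (1 - t) * (Ns (a - ua))\<^sup>2 + t * (Ns (b - ub))\<^sup>2"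
    using t conv[OF ns] by (intro square_convex_combination_le) (auto simp: is_norm_nonneg[OF ns])
  have Nc_sq: "(Nc u)\<^sup>2 \<le> (1 - t) * (Nc ua)\<^sup>2 + t * (Nc ub)\<^sup>2"
    using t conv[OF nc] unfolding u_def
    by (intro square_convex_combination_le) (auto simp: is_norm_nonneg[OF nc])
  have "env_obj p u \<le> (1/2) * ((1 - t) * (Nc ua)\<^sup>2 + t * (Nc ub)\<^sup>2)
      + (1/\<mu>) * ((1/2) * ((1 - t) * (Ns (a - ua))\<^sup>2 + t * (Ns (b - ub))\<^sup>2))"
    unfolding env_obj_def using mu by (intro add_mono mult_left_mono Nc_sq Ns_sq) auto
  also have "\<dots> = (1 - t) * env_obj a ua + t * env_obj b ub"
    unfolding env_obj_def using mu by (simp add: field_simps)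
  finally show "env p \<le> (1 - t) * env a + t * env b"
    using moreau_le_env_obj[of p u] ua ub by simp
qed simp

lemma continuous_moreau: "continuous_on UNIV env"
  by (rule convex_on_continuous[OF open_UNIV convex_moreau])

lemma moreau_borel_measurable: "env \<in> borel_measurable borel"
  by (rule borel_measurable_continuous_onI[OF continuous_moreau])

end

lemma L_smooth_half_sq_norm_ge_one:
  fixes N :: "'a::euclidean_space \<Rightarrow> real"
  assumes N: "is_norm N" and smooth: "L_smooth (\<lambda>v. (1/2) * (N v)\<^sup>2) N L"
  shows "1 \<le> L"
proof -
  obtain grad where grad: "\<And>a b. (1/2) * (N b)\<^sup>2 \<le> (1/2) * (N a)\<^sup>2 + grad a \<bullet> (b - a) + L / 2 * (N (a - b))\<^sup>2"
    using smooth unfolding L_smooth_def by blast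
  obtain y :: 'a where "y \<in> Basis" using nonempty_Basis by blast
  then have "0 < N y"
    using is_norm_eq_0_iff[OF N, of y] is_norm_nonneg[OF N, of y] nonzero_Basis by force
  moreover have "(N y)\<^sup>2 \<le> L * (N y)\<^sup>2"
    using grad[where a = 0 and b = y] grad[where a = 0 and b = "- y"] is_norm_minus[OF N, of y] is_norm_zero[OF N]
    by (simp add: inner_minus_right)
  ultimately show ?thesis by simp
qed

text \<open>The vector of one-sided partial derivatives, computed along the step sizes \<open>1 / (n + 1)\<close>: a
  choice of gradient that is visibly Borel measurable in the base point.\<close>
definition coord_grad :: "(real ^ 'd \<Rightarrow> real) \<Rightarrow> real ^ 'd \<Rightarrow> real ^ 'd" where
  "coord_grad f z = (\<chi> i. lim (\<lambda>n. real (Suc n) * (f (z + (1 / real (Suc n)) *\<^sub>R axis i 1) - f z)))"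

lemma coord_grad_eq_of_quadratic_upper:
  fixes f :: "real ^ 'd \<Rightarrow> real"
  assumes cvx: "convex_on UNIV f"
    and upper: "\<And>y. f y \<le> f z + v \<bullet> (y - z) + K * (N (y - z))\<^sup>2"
    and hom: "\<And>t y. N (t *\<^sub>R y) = \<bar>t\<bar> * N y"
  shows "coord_grad f z = v"
proof -
  have "(\<lambda>n. real (Suc n) * (f (z + (1 / real (Suc n)) *\<^sub>R axis i 1) - f z)) \<longlonglongrightarrow> v $ i" for i
    using difference_quotient_tendsto_of_subgradient[OF upper
        convex_quadratic_upper_imp_subgradient[OF cvx upper hom] hom]
    by (simp add: cart_eq_inner_axis)
  then show ?thesis unfolding coord_grad_def vec_eq_iff by (simp add: limI)
qed

locale smooth_moreau_env = moreau_env +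
  fixes L :: real
  assumes smooth: "L_smooth (\<lambda>v. (1/2) * (Ns v)\<^sup>2) Ns L"
begin

lemma L_ge_one: "1 \<le> L"
  by (rule L_smooth_half_sq_norm_ge_one[OF ns smooth])

text \<open>Evaluate the smoothness inequality for \<open>Ns\<^sup>2/2\<close> at \<open>x - u\<close> and \<open>z - u\<close>, with \<open>u\<close> a minimiser
  for \<open>x\<close>, and use \<open>u\<close> as competitor for \<open>z\<close>.\<close>
lemma moreau_quadratic_upper:
  "\<exists>v. \<forall>z. env z \<le> env x + v \<bullet> (z - x) + L / (2 * \<mu>) * (Ns (z - x))\<^sup>2"
proof -
  obtain grad where grad: "\<And>a b. (1/2) * (Ns b)\<^sup>2 \<le> (1/2) * (Ns a)\<^sup>2 + grad a \<bullet> (b - a) + L / 2 * (Ns (a - b))\<^sup>2"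
    using smooth unfolding L_smooth_def by blast
  obtain u where u: "env x = env_obj x u" using moreau_attained by blast
  have "env z \<le> env x + ((1/\<mu>) *\<^sub>R grad (x - u)) \<bullet> (z - x) + L / (2 * \<mu>) * (Ns (z - x))\<^sup>2" for z
  proof -
    have "(1/2) * (Ns (z - u))\<^sup>2 \<le> (1/2) * (Ns (x - u))\<^sup>2 + grad (x - u) \<bullet> (z - x) + L / 2 * (Ns (z - x))\<^sup>2"
      using grad[where a = "x - u" and b = "z - u"] is_norm_commute[OF ns, of x z] by simp
    then have "env_obj z u \<le> (1/2) * (Nc u)\<^sup>2
        + (1/\<mu>) * ((1/2) * (Ns (x - u))\<^sup>2 + grad (x - u) \<bullet> (z - x) + L / 2 * (Ns (z - x))\<^sup>2)"
      unfolding env_obj_def using mu by (intro add_left_mono mult_left_mono) auto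
    also have "\<dots> = env_obj x u + (1/\<mu>) * (grad (x - u) \<bullet> (z - x)) + L / (2 * \<mu>) * (Ns (z - x))\<^sup>2"
      unfolding env_obj_def using mu by (simp add: field_simps)
    finally show ?thesis using moreau_le_env_obj[of z u] u by simp
  qed
  then show ?thesis by blast
qed

end

locale smooth_moreau_env_cart = smooth_moreau_env Nc Ns \<mu> lcs ucs L
  for Nc Ns :: "real ^ 'd \<Rightarrow> real" and \<mu> lcs ucs L
begin

lemma moreau_quadratic_upper_coord_grad:
  "env y \<le> env z + coord_grad env z \<bullet> (y - z) + L / (2 * \<mu>) * (Ns (y - z))\<^sup>2"
proof -
  obtain v where v: "\<And>y. env y \<le> env z + v \<bullet> (y - z) + L / (2 * \<mu>) * (Ns (y - z))\<^sup>2"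
    using moreau_quadratic_upper by blast
  have "coord_grad env z = v"
    by (rule coord_grad_eq_of_quadratic_upper[OF convex_moreau v is_norm_scaleR[OF ns]])
  then show ?thesis using v by simp
qed

lemma moreau_subgradient_coord_grad: "env z + coord_grad env z \<bullet> (y - z) \<le> env y"
  by (rule convex_quadratic_upper_imp_subgradient[OF convex_moreau
        moreau_quadratic_upper_coord_grad is_norm_scaleR[OF ns]])

lemma inner_coord_grad_self: "coord_grad env z \<bullet> z = 2 * env z"
  by (rule subgradient_inner_self_of_2_homogeneous[OF moreau_subgradient_coord_grad
        moreau_scaleR moreau_nonneg])

lemma coord_grad_moreau_borel_measurable:
  "(\<lambda>z. coord_grad env z $ i) \<in> borel_measurable borel"
proof (rule borel_measurable_LIMSEQ_metric)
  have [measurable]: "env \<in> borel_measurable borel" by (rule moreau_borel_measurable)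
  have [measurable]: "(\<lambda>z::real ^ 'd. z + c *\<^sub>R a) \<in> borel_measurable borel" for c a
    by (intro borel_measurable_continuous_onI continuous_intros)
  show "(\<lambda>z. real (Suc n) * (env (z + (1 / real (Suc n)) *\<^sub>R axis i 1) - env z)) \<in> borel_measurable borel"
    for n by measurable
  show "(\<lambda>n. real (Suc n) * (env (z + (1 / real (Suc n)) *\<^sub>R axis i 1) - env z)) \<longlonglongrightarrow> coord_grad env z $ i"
    for z
    using difference_quotient_tendsto_of_subgradient[OF moreau_quadratic_upper_coord_grad
        moreau_subgradient_coord_grad is_norm_scaleR[OF ns]]
    by (simp add: cart_eq_inner_axis)
qed

text \<open>Test the subgradient inequality at \<open>z \<plusminus> (Nc z + 1) e\<^sub>i\<close> and bound \<open>env\<close> by \<open>Nc\<^sup>2/2\<close>.\<close>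
lemma abs_coord_grad_le: "\<bar>coord_grad env z $ i\<bar> \<le> (1/2) * (1 + Nc (axis i 1))\<^sup>2 * (Nc z + 1)"
proof -
  define s where "s = Nc z + 1"
  define a where "a = (axis i 1 :: real ^ 'd)"
  define g where "g = coord_grad env z $ i"
  have s: "1 \<le> s" using is_norm_nonneg[OF nc, of z] by (simp add: s_def)
  have bound: "t * g \<le> (1/2) * s\<^sup>2 * (1 + Nc a)\<^sup>2" if t: "\<bar>t\<bar> = s" for t
  proof -
    have "t * g \<le> env (z + t *\<^sub>R a)"
      using moreau_subgradient_coord_grad[of z "z + t *\<^sub>R a"] moreau_nonneg[of z]
      by (simp add: g_def a_def cart_eq_inner_axis)
    also have "\<dots> \<le> (1/2) * (Nc (z + t *\<^sub>R a))\<^sup>2" by (rule moreau_le_half_Nc_sq)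
    also have "(Nc (z + t *\<^sub>R a))\<^sup>2 \<le> (s * (1 + Nc a))\<^sup>2"
    proof (rule is_norm_sq_le[OF nc])
      have "Nc (z + t *\<^sub>R a) \<le> Nc z + s * Nc a"
        using is_norm_triangle[OF nc, of z "t *\<^sub>R a"] t by (simp add: is_norm_scaleR[OF nc])
      also have "\<dots> \<le> s * (1 + Nc a)"
        using s is_norm_nonneg[OF nc, of a] by (simp add: s_def algebra_simps)
      finally show "Nc (z + t *\<^sub>R a) \<le> s * (1 + Nc a)" .
    qed
    finally show ?thesis by (simp add: power_mult_distrib)
  qed
  have "s * \<bar>g\<bar> \<le> s * ((1/2) * (1 + Nc a)\<^sup>2 * s)"
    using bound[of s] bound[of "- s"] s by (simp add: abs_if power2_eq_square algebra_simps)
  then show ?thesis using s by (simp add: g_def a_def s_def)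
qed

text \<open>One step of the iteration with \<open>h = H x - x\<^sup>*\<close>: smoothness bounds \<open>env\<close> at the new point by
  its first-order expansion, and the drift term is controlled by 2-homogeneity of \<open>env\<close> together with
  \<open>env h \<le> \<gamma>\<^sup>2 alpha1 env z\<close>.\<close>
lemma moreau_descent_step:
  assumes contr: "Nc h \<le> \<gamma> * Nc z" and \<gamma>: "0 < \<gamma>" "\<gamma> \<le> 1" and e: "0 \<le> e"
  shows "env (z + e *\<^sub>R (h - z + W))
    \<le> (1 - 2 * (1 - \<gamma> * sqrt alpha1) * e) * env z + e * (coord_grad env z \<bullet> W)
       + L / (2 * \<mu>) * e\<^sup>2 * (8 * ucs\<^sup>2 * (Nc z)\<^sup>2 + 2 * (Ns W)\<^sup>2)"
proof -
  define v where "v = coord_grad env z"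
  define c where "c = \<gamma> * sqrt alpha1"
  define K where "K = L / (2 * \<mu>)"
  have K: "0 \<le> K" using L_ge_one mu by (simp add: K_def)
  have c: "0 < c" using \<gamma> alpha1_pos by (simp add: c_def)
  have "env h \<le> c\<^sup>2 * env z"
    using moreau_le_of_Nc_le[OF contr] \<gamma> alpha1_pos by (simp add: c_def power_mult_distrib)
  then have "v \<bullet> h \<le> 2 * c * env z"
    unfolding v_def by (rule subgradient_inner_le_of_2_homogeneous[OF moreau_subgradient_coord_grad
          moreau_scaleR inner_coord_grad_self _ c])
  then have drift: "v \<bullet> (h - z) \<le> - 2 * (1 - c) * env z"
    using inner_coord_grad_self[of z] by (simp add: v_def inner_diff_right algebra_simps)
  have "Nc (h - z) \<le> 2 * Nc z"
    using is_norm_diff_le[OF nc, of h z] contr \<gamma> is_norm_nonneg[OF nc, of z]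
      mult_left_le_one_le[of "Nc z" \<gamma>] by linarith
  then have "ucs * Nc (h - z) \<le> ucs * (2 * Nc z)" using ucs by (intro mult_left_mono) auto
  then have "Ns (h - z) \<le> 2 * ucs * Nc z" using equiv[of "h - z"] by linarith
  then have "(Ns (h - z))\<^sup>2 \<le> (2 * ucs * Nc z)\<^sup>2" by (rule is_norm_sq_le[OF ns])
  then have "(Ns (h - z))\<^sup>2 \<le> 4 * ucs\<^sup>2 * (Nc z)\<^sup>2" by (simp add: power_mult_distrib)
  then have "(Ns (h - z + W))\<^sup>2 \<le> 8 * ucs\<^sup>2 * (Nc z)\<^sup>2 + 2 * (Ns W)\<^sup>2"
    using is_norm_add_sq_le[OF ns, of "h - z" W] by linarith
  then have quad: "K * (Ns (e *\<^sub>R (h - z + W)))\<^sup>2 \<le> K * e\<^sup>2 * (8 * ucs\<^sup>2 * (Nc z)\<^sup>2 + 2 * (Ns W)\<^sup>2)"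
    using K e by (simp add: is_norm_scaleR[OF ns] power_mult_distrib mult.assoc mult_left_mono)
  have "env (z + e *\<^sub>R (h - z + W)) \<le> env z + e * (v \<bullet> (h - z)) + e * (v \<bullet> W) + K * (Ns (e *\<^sub>R (h - z + W)))\<^sup>2"
    using moreau_quadratic_upper_coord_grad[of "z + e *\<^sub>R (h - z + W)" z]
    by (simp add: v_def K_def inner_add_right distrib_left)
  also have "\<dots> \<le> env z + e * (- 2 * (1 - c) * env z) + e * (v \<bullet> W) + K * e\<^sup>2 * (8 * ucs\<^sup>2 * (Nc z)\<^sup>2 + 2 * (Ns W)\<^sup>2)"
    using drift quad e by (intro add_mono mult_left_mono) auto
  finally show ?thesis by (simp add: v_def c_def K_def algebra_simps)
qed

end

section \<open>Conditional expectations given the history\<close>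

lemma space_hist: "space (hist M x w n) = space M"
  unfolding hist_def by (rule space_measure_of) auto

lemma sets_hist:
  "sets (hist M x w n) = sigma_sets (space M)
     ({x i -` B \<inter> space M | i B. i \<le> n \<and> B \<in> sets borel} \<union>
      {w i -` B \<inter> space M | i B. i < n \<and> B \<in> sets borel})"
  unfolding hist_def by (rule sets_measure_of) auto

lemma subalgebra_hist:
  assumes "\<And>i. x i \<in> borel_measurable M" "\<And>i. w i \<in> borel_measurable M"
  shows "subalgebra M (hist M x w n)"
proof -
  let ?G = "{x i -` B \<inter> space M | i B. i \<le> n \<and> B \<in> sets borel} \<union>
      {w i -` B \<inter> space M | i B. i < n \<and> B \<in> sets borel}"
  have "?G \<subseteq> sets M" using assms by (auto intro: measurable_sets)
  then have "sigma_sets (space M) ?G \<subseteq> sets M" by (rule sets.sigma_sets_subset)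
  then show ?thesis unfolding subalgebra_def by (simp add: space_hist sets_hist)
qed

lemma measurable_hist:
  assumes "i \<le> n" shows "x i \<in> borel_measurable (hist M x w n)"
proof (rule measurableI)
  fix A :: "'b::topological_space set" assume "A \<in> sets borel"
  then have "x i -` A \<inter> space M \<in> sigma_sets (space M)
     ({x i -` B \<inter> space M | i B. i \<le> n \<and> B \<in> sets borel} \<union>
      {w i -` B \<inter> space M | i B. i < n \<and> B \<in> sets borel})"
    using assms by (intro sigma_sets.Basic) blast
  then show "x i -` A \<inter> space (hist M x w n) \<in> sets (hist M x w n)"
    by (simp add: space_hist sets_hist)
qed simp

context sigma_finite_subalgebra
begin

lemma real_cond_exp_le_measurable_add:
  assumes le: "\<And>\<omega>. \<omega> \<in> space M \<Longrightarrow> f \<omega> \<le> g \<omega> + h \<omega>"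
    and int: "integrable M f" "integrable M g" "integrable M h"
    and meas: "g \<in> borel_measurable F"
  shows "AE \<omega> in M. real_cond_exp M F f \<omega> \<le> g \<omega> + real_cond_exp M F h \<omega>"
proof -
  have "AE \<omega> in M. real_cond_exp M F f \<omega> \<le> real_cond_exp M F (\<lambda>\<omega>. g \<omega> + h \<omega>) \<omega>"
    using le int by (intro real_cond_exp_mono AE_I2) auto
  moreover have "AE \<omega> in M. real_cond_exp M F (\<lambda>\<omega>. g \<omega> + h \<omega>) \<omega>
      = real_cond_exp M F g \<omega> + real_cond_exp M F h \<omega>"
    using int by (intro real_cond_exp_add) auto
  moreover have "AE \<omega> in M. real_cond_exp M F g \<omega> = g \<omega>"
    using int meas by (intro real_cond_exp_F_meas)
  ultimately show ?thesis by eventually_elim simp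
qed

lemma real_cond_exp_le_add_noise:
  assumes le: "\<And>\<omega>. \<omega> \<in> space M \<Longrightarrow> f \<omega> \<le> g \<omega> + (a * T \<omega> + c * Q \<omega>)"
    and int: "integrable M f" "integrable M g" "integrable M T" "integrable M Q"
    and meas: "g \<in> borel_measurable F" and c: "0 \<le> c"
    and mean: "AE \<omega> in M. real_cond_exp M F T \<omega> = 0"
    and var: "AE \<omega> in M. real_cond_exp M F Q \<omega> \<le> b \<omega>"
  shows "AE \<omega> in M. real_cond_exp M F f \<omega> \<le> g \<omega> + c * b \<omega>"
proof -
  have "AE \<omega> in M. real_cond_exp M F f \<omega> \<le> g \<omega> + real_cond_exp M F (\<lambda>\<omega>. a * T \<omega> + c * Q \<omega>) \<omega>"
    using le int meas by (intro real_cond_exp_le_measurable_add) auto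
  moreover have "AE \<omega> in M. real_cond_exp M F (\<lambda>\<omega>. a * T \<omega> + c * Q \<omega>) \<omega>
      = a * real_cond_exp M F T \<omega> + c * real_cond_exp M F Q \<omega>"
    using real_cond_exp_add[OF integrable_mult_right[OF int(3), of a] integrable_mult_right[OF int(4), of c]]
      real_cond_exp_cmult[OF int(3), of a] real_cond_exp_cmult[OF int(4), of c]
    by eventually_elim simp
  ultimately show ?thesis using mean var
  proof eventually_elim
    case (elim \<omega>)
    then show ?case using mult_left_mono[OF elim(4) c] by simp
  qed
qed

lemma real_cond_exp_inner_eq_0:
  fixes V W :: "'a \<Rightarrow> real ^ 'd"
  assumes V: "\<And>i. (\<lambda>\<omega>. V \<omega> $ i) \<in> borel_measurable F"
    and W: "\<And>i. (\<lambda>\<omega>. W \<omega> $ i) \<in> borel_measurable M"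
    and int: "\<And>i. integrable M (\<lambda>\<omega>. V \<omega> $ i * W \<omega> $ i)"
    and mean: "\<And>i. AE \<omega> in M. real_cond_exp M F (\<lambda>\<omega>. W \<omega> $ i) \<omega> = 0"
  shows "AE \<omega> in M. real_cond_exp M F (\<lambda>\<omega>. V \<omega> \<bullet> W \<omega>) \<omega> = 0"
proof -
  have "AE \<omega> in M. real_cond_exp M F (\<lambda>\<omega>. \<Sum>i\<in>UNIV. V \<omega> $ i * W \<omega> $ i) \<omega>
      = (\<Sum>i\<in>UNIV. real_cond_exp M F (\<lambda>\<omega>. V \<omega> $ i * W \<omega> $ i) \<omega>)"
    using int by (rule real_cond_exp_sum)
  moreover have "AE \<omega> in M. \<forall>i\<in>UNIV. real_cond_exp M F (\<lambda>\<omega>. V \<omega> $ i * W \<omega> $ i) \<omega>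
      = V \<omega> $ i * real_cond_exp M F (\<lambda>\<omega>. W \<omega> $ i) \<omega>"
    using V W int by (intro AE_finite_allI real_cond_exp_mult) auto
  moreover have "AE \<omega> in M. \<forall>i\<in>UNIV. real_cond_exp M F (\<lambda>\<omega>. W \<omega> $ i) \<omega> = 0"
    using mean by (intro AE_finite_allI) auto
  ultimately show ?thesis by eventually_elim (simp add: inner_vec_def)
qed

lemma real_cond_exp_le_of_nn_cond_exp_le:
  assumes nonneg: "\<And>\<omega>. 0 \<le> f \<omega>" "\<And>\<omega>. 0 \<le> b \<omega>"
    and le: "AE \<omega> in M. nn_cond_exp M F (\<lambda>\<omega>. ennreal (f \<omega>)) \<omega> \<le> ennreal (b \<omega>)"
  shows "AE \<omega> in M. real_cond_exp M F f \<omega> \<le> b \<omega>"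
proof -
  have "(\<lambda>\<omega>. ennreal (- f \<omega>)) = (\<lambda>_. 0)" using nonneg by (simp add: ennreal_neg)
  then have "AE \<omega> in M. nn_cond_exp M F (\<lambda>\<omega>. ennreal (- f \<omega>)) \<omega> = 0"
    using nn_cond_exp_F_meas[of "\<lambda>_. 0"] by simp
  with le show ?thesis
    unfolding real_cond_exp_def
    by eventually_elim (use nonneg in \<open>auto dest: enn2real_mono\<close>)
qed

lemma integrable_of_nn_cond_exp_le:
  assumes nonneg: "\<And>\<omega>. 0 \<le> f \<omega>" and f: "f \<in> borel_measurable M"
    and le: "AE \<omega> in M. nn_cond_exp M F (\<lambda>\<omega>. ennreal (f \<omega>)) \<omega> \<le> ennreal (b \<omega>)"
    and b: "integrable M b"
  shows "integrable M f"
proof -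
  have "(\<integral>\<^sup>+\<omega>. ennreal (f \<omega>) \<partial>M) = (\<integral>\<^sup>+\<omega>. nn_cond_exp M F (\<lambda>\<omega>. ennreal (f \<omega>)) \<omega> \<partial>M)"
    using nn_cond_exp_intg[of "\<lambda>_. 1" "\<lambda>\<omega>. ennreal (f \<omega>)"] f by simp
  also have "\<dots> \<le> (\<integral>\<^sup>+\<omega>. ennreal (b \<omega>) \<partial>M)"
    using le by (intro nn_integral_mono_AE) auto
  also have "\<dots> \<le> (\<integral>\<^sup>+\<omega>. ennreal \<bar>b \<omega>\<bar> \<partial>M)"
    by (intro nn_integral_mono) (simp add: ennreal_leI)
  also have "\<dots> < \<infinity>"
    using integrableD(2)[OF integrable_abs[OF b]] by (simp add: less_top)
  finally show ?thesis using nonneg f by (intro integrableI_nonneg) auto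
qed

end

section \<open>The stochastic approximation recursion\<close>

locale stoch_approx = smooth_moreau_env_cart Nc Ns \<mu> lcs ucs L
  for Nc Ns :: "real ^ 'd \<Rightarrow> real" and \<mu> lcs ucs L +
  fixes Ne :: "real ^ 'd \<Rightarrow> real" and H :: "real ^ 'd \<Rightarrow> real ^ 'd"
    and \<gamma> A B les ues :: real and xstar x0 :: "real ^ 'd"
    and M :: "'w measure" and x w :: "nat \<Rightarrow> 'w \<Rightarrow> real ^ 'd" and \<epsilon> :: "nat \<Rightarrow> real"
  assumes ne: "is_norm Ne"
    and gamma: "0 < \<gamma>" "\<gamma> \<le> 1"
    and contr: "\<And>u v. Nc (H u - H v) \<le> \<gamma> * Nc (u - v)"
    and fixpt: "H xstar = xstar"
    and prob_M: "prob_space M"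
    and x0: "\<And>\<omega>. x 0 \<omega> = x0"
    and rec: "\<And>n \<omega>. x (Suc n) \<omega> = x n \<omega> + \<epsilon> n *\<^sub>R (H (x n \<omega>) - x n \<omega> + w n \<omega>)"
    and w_meas: "\<And>n. w n \<in> borel_measurable M"
    and w_mean: "\<And>n i. AE \<omega> in M. real_cond_exp M (hist M x w n) (\<lambda>\<omega>. w n \<omega> $ i) \<omega> = 0"
    and w_var: "\<And>n. AE \<omega> in M. nn_cond_exp M (hist M x w n) (\<lambda>\<omega>. ennreal ((Ne (w n \<omega>))\<^sup>2))
                   \<omega> \<le> ennreal (A + B * (Ne (x n \<omega>))\<^sup>2)"
    and AB: "0 \<le> A" "0 \<le> B"
    and eps: "\<And>n. 0 \<le> \<epsilon> n"
    and les: "0 < les" "les \<le> 1" and ucs_ge_1: "1 \<le> ucs" and ues_ge_1: "1 \<le> ues"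
    and equiv_es: "\<And>v. les * Ne v \<le> Ns v \<and> Ns v \<le> ues * Ne v"
begin

sublocale prob_space M by (rule prob_M)

definition alpha2 :: real where "alpha2 = 1 - \<gamma> * sqrt alpha1"

definition alpha3 :: real where
  "alpha3 = 4 * ucs\<^sup>2 * ues\<^sup>2 * (B + 2) * L * (lcs\<^sup>2 + \<mu>) / (\<mu> * lcs\<^sup>2 * les\<^sup>2)"

definition alpha4 :: real where "alpha4 = alpha3 / (2 * (B + 2))"

definition err :: "nat \<Rightarrow> 'w \<Rightarrow> real ^ 'd" where "err n \<omega> = x n \<omega> - xstar"

lemma Ne_le_Nc: "Ne v \<le> ucs / les * Nc v"
  using equiv_es[of v] equiv[of v] les by (simp add: field_simps)

lemma Nc_le_Ne: "Nc v \<le> ues / lcs * Ne v"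
  using equiv_es[of v] equiv[of v] lcs by (simp add: field_simps)

declare is_norm_borel_measurable[OF nc, measurable] is_norm_borel_measurable[OF ne, measurable]
  moreau_borel_measurable[measurable] coord_grad_moreau_borel_measurable[measurable]

lemma H_measurable[measurable]: "H \<in> borel_measurable borel"
  by (rule borel_measurable_continuous_onI[OF lipschitz_is_norm_continuous[OF nc contr]])

declare w_meas[measurable]

lemma w_component_measurable[measurable]: "(\<lambda>\<omega>. w n \<omega> $ i) \<in> borel_measurable M"
  by (rule measurable_compose[OF w_meas borel_measurable_continuous_onI[OF
        linear_continuous_on[OF bounded_linear_vec_nth]]])

lemma x_measurable[measurable]: "x n \<in> borel_measurable M"
proof (induction n)
  case 0
  then show ?case by (simp add: x0[abs_def])
next
  case (Suc n)
  then show ?case by (simp add: rec[abs_def])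
qed

lemma sigma_finite_subalgebra_hist: "sigma_finite_subalgebra M (hist M x w n)"
proof (rule finite_measure_subalgebra_is_sigma_finite)
  show "finite_measure_subalgebra M (hist M x w n)"
    using prob_M subalgebra_hist[OF x_measurable w_meas]
    by (intro finite_measure_subalgebra.intro finite_measure_subalgebra_axioms.intro)
       (auto simp: prob_space_def)
qed

lemma integrable_Ne_w_sq_of:
  assumes "integrable M (\<lambda>\<omega>. (Nc (x n \<omega>))\<^sup>2)"
  shows "integrable M (\<lambda>\<omega>. (Ne (w n \<omega>))\<^sup>2)"
proof (rule sigma_finite_subalgebra.integrable_of_nn_cond_exp_le[OF sigma_finite_subalgebra_hist])
  show "integrable M (\<lambda>\<omega>. A + B * (Ne (x n \<omega>))\<^sup>2)"
  proof (rule Bochner_Integration.integrable_bound)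
    show "integrable M (\<lambda>\<omega>. A + B * ((ucs / les)\<^sup>2 * (Nc (x n \<omega>))\<^sup>2))" using assms by simp
    have "(Ne v)\<^sup>2 \<le> (ucs / les)\<^sup>2 * (Nc v)\<^sup>2" for v
      using is_norm_sq_le[OF ne Ne_le_Nc[of v]] by (simp only: power_mult_distrib)
    then show "AE \<omega> in M. norm (A + B * (Ne (x n \<omega>))\<^sup>2) \<le> norm (A + B * ((ucs / les)\<^sup>2 * (Nc (x n \<omega>))\<^sup>2))"
      using AB by (intro AE_I2) (auto intro!: mult_left_mono)
  qed measurable
qed (use w_var in auto)

lemma Nc_x_Suc_le:
  "Nc (x (Suc n) \<omega>) \<le> (\<bar>1 - \<epsilon> n\<bar> + \<epsilon> n * \<gamma>) * Nc (x n \<omega>) + \<epsilon> n * (ues / lcs) * Ne (w n \<omega>)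
     + \<epsilon> n * (1 + \<gamma>) * Nc xstar"
proof -
  have eps_n: "0 \<le> \<epsilon> n" by (rule eps)
  have "Nc (H (x n \<omega>)) \<le> Nc (H (x n \<omega>) - H xstar) + Nc xstar"
    using is_norm_triangle[OF nc, of "H (x n \<omega>) - H xstar" xstar] fixpt by simp
  also have "\<dots> \<le> \<gamma> * (Nc (x n \<omega>) + Nc xstar) + Nc xstar"
    using contr[of "x n \<omega>" xstar] mult_left_mono[OF is_norm_diff_le[OF nc, of "x n \<omega>" xstar], of \<gamma>]
      gamma by linarith
  finally have "\<epsilon> n * Nc (H (x n \<omega>)) \<le> \<epsilon> n * (\<gamma> * (Nc (x n \<omega>) + Nc xstar) + Nc xstar)"
    using eps_n by (rule mult_left_mono)
  then have H_term: "\<epsilon> n * Nc (H (x n \<omega>)) \<le> \<epsilon> n * \<gamma> * Nc (x n \<omega>) + \<epsilon> n * (1 + \<gamma>) * Nc xstar"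
    by (simp add: algebra_simps)
  have w_term: "\<epsilon> n * Nc (w n \<omega>) \<le> \<epsilon> n * (ues / lcs) * Ne (w n \<omega>)"
    using mult_left_mono[OF Nc_le_Ne eps_n] by (simp add: mult.assoc)
  have "x (Suc n) \<omega> = (1 - \<epsilon> n) *\<^sub>R x n \<omega> + (\<epsilon> n *\<^sub>R H (x n \<omega>) + \<epsilon> n *\<^sub>R w n \<omega>)"
    by (simp add: rec algebra_simps)
  then have "Nc (x (Suc n) \<omega>) \<le> Nc ((1 - \<epsilon> n) *\<^sub>R x n \<omega>) + (Nc (\<epsilon> n *\<^sub>R H (x n \<omega>)) + Nc (\<epsilon> n *\<^sub>R w n \<omega>))"
    using is_norm_triangle[OF nc] add_left_mono order_trans by metis
  also have "\<dots> = \<bar>1 - \<epsilon> n\<bar> * Nc (x n \<omega>) + \<epsilon> n * Nc (H (x n \<omega>)) + \<epsilon> n * Nc (w n \<omega>)"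
    using eps_n by (simp add: is_norm_scaleR[OF nc])
  finally show ?thesis using H_term w_term unfolding distrib_right by linarith
qed

lemma integrable_Nc_x_sq: "integrable M (\<lambda>\<omega>. (Nc (x n \<omega>))\<^sup>2)"
proof (induction n)
  case 0
  then show ?case by (simp add: x0)
next
  case (Suc n)
  define a b c where "a = \<bar>1 - \<epsilon> n\<bar> + \<epsilon> n * \<gamma>" and "b = \<epsilon> n * (ues / lcs)"
    and "c = \<epsilon> n * (1 + \<gamma>) * Nc xstar"
  show ?case
  proof (rule Bochner_Integration.integrable_bound)
    show "integrable M (\<lambda>\<omega>. 4 * a\<^sup>2 * (Nc (x n \<omega>))\<^sup>2 + 4 * b\<^sup>2 * (Ne (w n \<omega>))\<^sup>2 + 2 * c\<^sup>2)"
      using Suc.IH integrable_Ne_w_sq_of[OF Suc.IH] by simp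
    have "(Nc (x (Suc n) \<omega>))\<^sup>2 \<le> 4 * a\<^sup>2 * (Nc (x n \<omega>))\<^sup>2 + 4 * b\<^sup>2 * (Ne (w n \<omega>))\<^sup>2 + 2 * c\<^sup>2" for \<omega>
    proof -
      have "(Nc (x (Suc n) \<omega>))\<^sup>2 \<le> (a * Nc (x n \<omega>) + b * Ne (w n \<omega>) + c)\<^sup>2"
        using is_norm_sq_le[OF nc Nc_x_Suc_le] by (simp add: a_def b_def c_def)
      also have "\<dots> \<le> 2 * (a * Nc (x n \<omega>) + b * Ne (w n \<omega>))\<^sup>2 + 2 * c\<^sup>2" by (rule square_add_le)
      also have "(a * Nc (x n \<omega>) + b * Ne (w n \<omega>))\<^sup>2 \<le> 2 * (a * Nc (x n \<omega>))\<^sup>2 + 2 * (b * Ne (w n \<omega>))\<^sup>2"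
        by (rule square_add_le)
      finally show ?thesis by (simp add: power_mult_distrib)
    qed
    then show "AE \<omega> in M. norm ((Nc (x (Suc n) \<omega>))\<^sup>2)
        \<le> norm (4 * a\<^sup>2 * (Nc (x n \<omega>))\<^sup>2 + 4 * b\<^sup>2 * (Ne (w n \<omega>))\<^sup>2 + 2 * c\<^sup>2)"
      by (intro AE_I2) (simp add: abs_of_nonneg)
  qed measurable
qed

lemma integrable_Ne_w_sq: "integrable M (\<lambda>\<omega>. (Ne (w n \<omega>))\<^sup>2)"
  by (rule integrable_Ne_w_sq_of[OF integrable_Nc_x_sq])

lemma err_measurable_hist[measurable]: "err n \<in> borel_measurable (hist M x w n)"
  using measurable_hist[of n n x M w] unfolding err_def[abs_def] by measurable

lemma err_measurable[measurable]: "err n \<in> borel_measurable M"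
  unfolding err_def[abs_def] by measurable

lemma integrable_Nc_err_sq: "integrable M (\<lambda>\<omega>. (Nc (err n \<omega>))\<^sup>2)"
proof (rule Bochner_Integration.integrable_bound)
  show "integrable M (\<lambda>\<omega>. 2 * (Nc (x n \<omega>))\<^sup>2 + 2 * (Nc xstar)\<^sup>2)"
    using integrable_Nc_x_sq by simp
  show "AE \<omega> in M. norm ((Nc (err n \<omega>))\<^sup>2) \<le> norm (2 * (Nc (x n \<omega>))\<^sup>2 + 2 * (Nc xstar)\<^sup>2)"
    using is_norm_add_sq_le[OF nc, of "x n _" "- xstar"] is_norm_minus[OF nc, of xstar]
    by (intro AE_I2) (simp add: err_def)
qed measurable

lemma integrable_moreau_err: "integrable M (\<lambda>\<omega>. env (err n \<omega>))"
proof (rule Bochner_Integration.integrable_bound[OF integrable_Nc_err_sq])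
  show "AE \<omega> in M. norm (env (err n \<omega>)) \<le> norm ((Nc (err n \<omega>))\<^sup>2)"
  proof (intro AE_I2)
    fix \<omega>
    show "norm (env (err n \<omega>)) \<le> norm ((Nc (err n \<omega>))\<^sup>2)"
      using moreau_le_half_Nc_sq[of "err n \<omega>"] moreau_nonneg[of "err n \<omega>"]
        zero_le_power2[of "Nc (err n \<omega>)"] by simp
  qed
qed measurable

lemma integrable_grad_noise: "integrable M (\<lambda>\<omega>. coord_grad env (err n \<omega>) $ i * w n \<omega> $ i)"
proof -
  obtain m where m: "0 < m" "\<And>u. m * norm u \<le> Nc u"
    using is_norm_bounded_below[OF nc] by blast
  define C where "C = (1/2) * (1 + Nc (axis i 1))\<^sup>2 * (ues / (lcs * m))"
  have C: "0 \<le> C" using lcs m ues_ge_1 by (simp add: C_def)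
  show ?thesis
  proof (rule Bochner_Integration.integrable_bound)
    show "integrable M (\<lambda>\<omega>. C * ((Nc (err n \<omega>))\<^sup>2 + 1 + (Ne (w n \<omega>))\<^sup>2))"
      using integrable_Nc_err_sq integrable_Ne_w_sq by simp
    have "\<bar>coord_grad env z $ i * W $ i\<bar> \<le> C * ((Nc z)\<^sup>2 + 1 + (Ne W)\<^sup>2)" for z W
    proof -
      have "m * \<bar>W $ i\<bar> \<le> m * norm W"
        using mult_left_mono[OF component_le_norm_cart[of W i], of m] m(1) by simp
      also have "\<dots> \<le> Nc W" by (rule m(2))
      finally have "lcs * (m * \<bar>W $ i\<bar>) \<le> lcs * Nc W" using lcs by simp
      also have "\<dots> \<le> ues * Ne W" using equiv[of W] equiv_es[of W] by linarith
      finally have "\<bar>W $ i\<bar> \<le> ues / (lcs * m) * Ne W"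
        using m(1) lcs by (simp add: field_simps)
      then have "\<bar>coord_grad env z $ i * W $ i\<bar>
          \<le> ((1/2) * (1 + Nc (axis i 1))\<^sup>2 * (Nc z + 1)) * (ues / (lcs * m) * Ne W)"
        unfolding abs_mult using abs_coord_grad_le
        by (intro mult_mono) (auto simp: is_norm_nonneg[OF nc])
      also have "\<dots> = C * ((Nc z + 1) * Ne W)" by (simp add: C_def)
      also have "(Nc z + 1) * Ne W \<le> (Nc z)\<^sup>2 + 1 + (Ne W)\<^sup>2"
      proof -
        have "2 * ((Nc z + 1) * Ne W) \<le> (Nc z + 1)\<^sup>2 + (Ne W)\<^sup>2"
          using sum_squares_bound[of "Nc z + 1" "Ne W"] by (simp only: mult.assoc)
        moreover have "(Nc z + 1)\<^sup>2 \<le> 2 * (Nc z)\<^sup>2 + 2" using square_add_le[of "Nc z" 1] by simp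
        ultimately show ?thesis using zero_le_power2[of "Ne W"] by linarith
      qed
      finally show ?thesis using C by (simp add: mult_left_mono)
    qed
    then show "AE \<omega> in M. norm (coord_grad env (err n \<omega>) $ i * w n \<omega> $ i)
        \<le> norm (C * ((Nc (err n \<omega>))\<^sup>2 + 1 + (Ne (w n \<omega>))\<^sup>2))"
      using C by (intro AE_I2) simp
  qed measurable
qed

lemma moreau_err_Suc_le:
  "env (err (Suc n) \<omega>) \<le> (1 - 2 * alpha2 * \<epsilon> n) * env (err n \<omega>)
     + 8 * (L / (2 * \<mu>)) * (\<epsilon> n)\<^sup>2 * ucs\<^sup>2 * (Nc (err n \<omega>))\<^sup>2
     + (\<epsilon> n * (coord_grad env (err n \<omega>) \<bullet> w n \<omega>)
        + 2 * (L / (2 * \<mu>)) * (\<epsilon> n)\<^sup>2 * ues\<^sup>2 * (Ne (w n \<omega>))\<^sup>2)"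
proof -
  define K where "K = L / (2 * \<mu>) * (\<epsilon> n)\<^sup>2"
  have K: "0 \<le> K" using L_ge_one mu by (simp add: K_def)
  have step: "err (Suc n) \<omega> = err n \<omega> + \<epsilon> n *\<^sub>R ((H (x n \<omega>) - xstar) - err n \<omega> + w n \<omega>)"
    by (simp add: err_def rec algebra_simps)
  have drift: "Nc (H (x n \<omega>) - xstar) \<le> \<gamma> * Nc (err n \<omega>)"
    using contr[of "x n \<omega>" xstar] fixpt by (simp add: err_def)
  have "env (err (Suc n) \<omega>) \<le> (1 - 2 * alpha2 * \<epsilon> n) * env (err n \<omega>)
      + \<epsilon> n * (coord_grad env (err n \<omega>) \<bullet> w n \<omega>)
      + K * (8 * ucs\<^sup>2 * (Nc (err n \<omega>))\<^sup>2 + 2 * (Ns (w n \<omega>))\<^sup>2)"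
    unfolding step alpha2_def K_def by (rule moreau_descent_step[OF drift gamma eps])
  also have "\<dots> \<le> (1 - 2 * alpha2 * \<epsilon> n) * env (err n \<omega>)
      + \<epsilon> n * (coord_grad env (err n \<omega>) \<bullet> w n \<omega>)
      + K * (8 * ucs\<^sup>2 * (Nc (err n \<omega>))\<^sup>2 + 2 * (ues\<^sup>2 * (Ne (w n \<omega>))\<^sup>2))"
    using is_norm_sq_le[OF ns, of "w n \<omega>" "ues * Ne (w n \<omega>)"] equiv_es K
    by (intro add_left_mono mult_left_mono) (auto simp: power_mult_distrib)
  finally show ?thesis by (simp add: K_def algebra_simps)
qed

lemma cond_exp_moreau_err_le:
  "AE \<omega> in M. real_cond_exp M (hist M x w n) (\<lambda>\<omega>. env (err (Suc n) \<omega>)) \<omega>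
     \<le> (1 - 2 * alpha2 * \<epsilon> n) * env (err n \<omega>)
        + 8 * (L / (2 * \<mu>)) * (\<epsilon> n)\<^sup>2 * ucs\<^sup>2 * (Nc (err n \<omega>))\<^sup>2
        + 2 * (L / (2 * \<mu>)) * (\<epsilon> n)\<^sup>2 * ues\<^sup>2 * (A + B * (Ne (x n \<omega>))\<^sup>2)"
proof -
  interpret sigma_finite_subalgebra M "hist M x w n" by (rule sigma_finite_subalgebra_hist)
  show ?thesis
  proof (rule real_cond_exp_le_add_noise)
    show "env (err (Suc n) \<omega>) \<le> (1 - 2 * alpha2 * \<epsilon> n) * env (err n \<omega>)
        + 8 * (L / (2 * \<mu>)) * (\<epsilon> n)\<^sup>2 * ucs\<^sup>2 * (Nc (err n \<omega>))\<^sup>2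
        + (\<epsilon> n * (coord_grad env (err n \<omega>) \<bullet> w n \<omega>)
           + 2 * (L / (2 * \<mu>)) * (\<epsilon> n)\<^sup>2 * ues\<^sup>2 * (Ne (w n \<omega>))\<^sup>2)" for \<omega>
      by (rule moreau_err_Suc_le)
    show "integrable M (\<lambda>\<omega>. env (err (Suc n) \<omega>))" by (rule integrable_moreau_err)
    show "integrable M (\<lambda>\<omega>. (1 - 2 * alpha2 * \<epsilon> n) * env (err n \<omega>)
        + 8 * (L / (2 * \<mu>)) * (\<epsilon> n)\<^sup>2 * ucs\<^sup>2 * (Nc (err n \<omega>))\<^sup>2)"
      using integrable_moreau_err integrable_Nc_err_sq by simp
    show "integrable M (\<lambda>\<omega>. coord_grad env (err n \<omega>) \<bullet> w n \<omega>)"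
      unfolding inner_vec_def inner_real_def
      by (intro Bochner_Integration.integrable_sum integrable_grad_noise)
    show "integrable M (\<lambda>\<omega>. (Ne (w n \<omega>))\<^sup>2)" by (rule integrable_Ne_w_sq)
    show "(\<lambda>\<omega>. (1 - 2 * alpha2 * \<epsilon> n) * env (err n \<omega>)
        + 8 * (L / (2 * \<mu>)) * (\<epsilon> n)\<^sup>2 * ucs\<^sup>2 * (Nc (err n \<omega>))\<^sup>2) \<in> borel_measurable (hist M x w n)"
      by measurable
    show "0 \<le> 2 * (L / (2 * \<mu>)) * (\<epsilon> n)\<^sup>2 * ues\<^sup>2" using L_ge_one mu by simp
    show "AE \<omega> in M. real_cond_exp M (hist M x w n) (\<lambda>\<omega>. coord_grad env (err n \<omega>) \<bullet> w n \<omega>) \<omega> = 0"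
    proof (rule real_cond_exp_inner_eq_0)
      show "(\<lambda>\<omega>. coord_grad env (err n \<omega>) $ i) \<in> borel_measurable (hist M x w n)" for i
        by measurable
    qed (use integrable_grad_noise w_mean in auto)
    show "AE \<omega> in M. real_cond_exp M (hist M x w n) (\<lambda>\<omega>. (Ne (w n \<omega>))\<^sup>2) \<omega> \<le> A + B * (Ne (x n \<omega>))\<^sup>2"
      by (rule real_cond_exp_le_of_nn_cond_exp_le) (use w_var AB in auto)
  qed

qed

end

lemma one_step_coefficients_le:
  fixes P u v r D m n q s A B :: real
  assumes "0 \<le> P" "0 \<le> v" "0 \<le> A" "0 \<le> B" "1 \<le> r" "u \<le> v * r"
    and "0 \<le> n" "n \<le> 2 * D * m" "q \<le> 2 * r * n + 2 * r * s"
  shows "8 * P * u * n + 2 * P * v * (A + B * q)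
    \<le> 8 * P * v * r * (B + 2) * D * m + 2 * P * v * r * (A + 2 * B * s)"
proof -
  have "8 * P * v * r * (B + 2) * D * m + 2 * P * v * r * (A + 2 * B * s) - (8 * P * u * n + 2 * P * v * (A + B * q))
      = 8 * P * (v * r - u) * n + 2 * P * v * (r - 1) * A + 2 * P * v * B * (2 * r * n + 2 * r * s - q)
        + 4 * P * v * r * (B + 2) * (2 * D * m - n)"
    by (simp add: algebra_simps)
  also have "0 \<le> \<dots>" using assms by (intro add_nonneg_nonneg mult_nonneg_nonneg) auto
  finally show ?thesis by simp
qed

context stoch_approx
begin

lemma step_coefficients_le:
  "(1 - 2 * alpha2 * e) * env z + 8 * (L / (2 * \<mu>)) * e\<^sup>2 * ucs\<^sup>2 * (Nc z)\<^sup>2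
     + 2 * (L / (2 * \<mu>)) * e\<^sup>2 * ues\<^sup>2 * (A + B * (Ne (z + xstar))\<^sup>2)
   \<le> (1 - 2 * alpha2 * e + alpha3 * e\<^sup>2) * env z
     + alpha4 * (A + 2 * B * (Nc xstar)\<^sup>2) / (2 * (1 + \<mu> / lcs\<^sup>2)) * e\<^sup>2"
proof -
  define P r D where "P = L / (2 * \<mu>) * e\<^sup>2" and "r = ucs\<^sup>2 / les\<^sup>2" and "D = 1 + \<mu> / lcs\<^sup>2"
  have r: "1 \<le> r" using les ucs_ge_1 by (simp add: r_def power_le_one one_le_power)
  have "ucs\<^sup>2 \<le> r" using les by (simp add: r_def le_divide_eq power_le_one mult_left_le)
  also have "r \<le> ues\<^sup>2 * r" using r ues_ge_1 by (simp add: one_le_power)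
  finally have ur: "ucs\<^sup>2 \<le> ues\<^sup>2 * r" .
  have "(Ne (z + xstar))\<^sup>2 \<le> r * (Nc (z + xstar))\<^sup>2"
    using is_norm_sq_le[OF ne Ne_le_Nc] by (simp add: r_def power_mult_distrib power_divide)
  also have "\<dots> \<le> r * (2 * (Nc z)\<^sup>2 + 2 * (Nc xstar)\<^sup>2)"
    using r is_norm_add_sq_le[OF nc] by (intro mult_left_mono) auto
  finally have q: "(Ne (z + xstar))\<^sup>2 \<le> 2 * r * (Nc z)\<^sup>2 + 2 * r * (Nc xstar)\<^sup>2"
    by (simp add: algebra_simps)
  have main: "8 * P * ucs\<^sup>2 * (Nc z)\<^sup>2 + 2 * P * ues\<^sup>2 * (A + B * (Ne (z + xstar))\<^sup>2)
      \<le> 8 * P * ues\<^sup>2 * r * (B + 2) * D * env z + 2 * P * ues\<^sup>2 * r * (A + 2 * B * (Nc xstar)\<^sup>2)"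
    using L_ge_one mu AB r ur q Nc_sq_le_moreau[of z]
    by (intro one_step_coefficients_le) (auto simp: P_def D_def)
  have alpha3: "alpha3 = 8 * (L / (2 * \<mu>)) * ues\<^sup>2 * r * (B + 2) * D"
    using mu lcs les by (simp add: alpha3_def r_def D_def field_simps)
  have alpha4: "alpha4 * (A + 2 * B * (Nc xstar)\<^sup>2) / (2 * D) = 2 * (L / (2 * \<mu>)) * ues\<^sup>2 * r * (A + 2 * B * (Nc xstar)\<^sup>2)"
  proof -
    have D: "0 < D" and "B + 2 \<noteq> 0" using mu AB by (simp_all add: D_def add_pos_nonneg)
    moreover have "alpha3 = (2 * (B + 2)) * (4 * (L / (2 * \<mu>)) * ues\<^sup>2 * r * D)"
      by (simp add: alpha3 algebra_simps)
    ultimately have "alpha4 = 4 * (L / (2 * \<mu>)) * ues\<^sup>2 * r * D"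
      unfolding alpha4_def by simp
    then show ?thesis using D mu by (simp add: field_simps)
  qed
  have "alpha3 * e\<^sup>2 * env z = 8 * P * ues\<^sup>2 * r * (B + 2) * D * env z"
    by (simp add: alpha3 P_def mult_ac)
  moreover have "alpha4 * (A + 2 * B * (Nc xstar)\<^sup>2) / (2 * D) * e\<^sup>2
      = 2 * P * ues\<^sup>2 * r * (A + 2 * B * (Nc xstar)\<^sup>2)"
    unfolding alpha4 P_def by (simp add: mult_ac)
  moreover have "8 * (L / (2 * \<mu>)) * e\<^sup>2 * ucs\<^sup>2 * (Nc z)\<^sup>2 = 8 * P * ucs\<^sup>2 * (Nc z)\<^sup>2"
    and "2 * (L / (2 * \<mu>)) * e\<^sup>2 * ues\<^sup>2 * (A + B * (Ne (z + xstar))\<^sup>2)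
      = 2 * P * ues\<^sup>2 * (A + B * (Ne (z + xstar))\<^sup>2)"
    by (simp_all add: P_def mult_ac)
  ultimately show ?thesis using main unfolding D_def[symmetric] distrib_right by linarith
qed

lemma cond_exp_moreau_bound:
  "AE \<omega> in M. real_cond_exp M (hist M x w k) (\<lambda>\<omega>. env (x (Suc k) \<omega> - xstar)) \<omega>
     \<le> (1 - 2 * alpha2 * \<epsilon> k + alpha3 * (\<epsilon> k)\<^sup>2) * env (x k \<omega> - xstar)
        + alpha4 * (A + 2 * B * (Nc xstar)\<^sup>2) / (2 * (1 + \<mu> / lcs\<^sup>2)) * (\<epsilon> k)\<^sup>2"
  using cond_exp_moreau_err_le[of k]
proof eventually_elim
  case (elim \<omega>)
  then show ?case
    using step_coefficients_le[of "\<epsilon> k" "err k \<omega>"] by (simp add: err_def[abs_def])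
qed

end

theorem proposition1:
  fixes Nc Ne Ns :: "real ^ 'd \<Rightarrow> real"
    and H :: "real ^ 'd \<Rightarrow> real ^ 'd"
    and \<gamma> A B L \<mu> lcs les ucs ues :: real
    and xstar x0 :: "real ^ 'd"
    and M :: "'w measure"
    and x w :: "nat \<Rightarrow> 'w \<Rightarrow> real ^ 'd"
    and \<epsilon> :: "nat \<Rightarrow> real"
    and k :: nat
  assumes norms: "is_norm Nc" "is_norm Ne" "is_norm Ns"
    and gamma: "0 < \<gamma>" "\<gamma> < 1"
    and contr: "\<And>u v. Nc (H u - H v) \<le> \<gamma> * Nc (u - v)"
    and fixpt: "H xstar = xstar"
    and P: "prob_space M"
    and x0: "\<And>\<omega>. x 0 \<omega> = x0"
    and rec: "\<And>n \<omega>. x (Suc n) \<omega> = x n \<omega> + \<epsilon> n *\<^sub>R (H (x n \<omega>) - x n \<omega> + w n \<omega>)"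
    and w_meas: "\<And>n. w n \<in> borel_measurable M"
    and w_int: "\<And>n. integrable M (w n)"
    and w_mean: "\<And>n i. AE \<omega> in M. real_cond_exp M (hist M x w n) (\<lambda>\<omega>. w n \<omega> $ i) \<omega> = 0"
    and w_var: "\<And>n. AE \<omega> in M. nn_cond_exp M (hist M x w n) (\<lambda>\<omega>. ennreal ((Ne (w n \<omega>))\<^sup>2))
                   \<omega> \<le> ennreal (A + B * (Ne (x n \<omega>))\<^sup>2)"
    and AB: "A > 0" "B > 0"
    and eps_pos: "\<And>n. \<epsilon> n > 0"
    and eps_mono: "\<And>n. \<epsilon> (Suc n) \<le> \<epsilon> n"
    and smooth: "L_smooth (\<lambda>v. (1/2) * (Ns v)\<^sup>2) Ns L"
    and bnds: "0 < lcs" "lcs \<le> 1" "0 < les" "les \<le> 1" "1 \<le> ucs" "1 \<le> ues"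
    and equiv_cs: "\<And>v. lcs * Nc v \<le> Ns v \<and> Ns v \<le> ucs * Nc v"
    and equiv_es: "\<And>v. les * Ne v \<le> Ns v \<and> Ns v \<le> ues * Ne v"
    and mu: "\<mu> > 0"
    and alpha2_pos: "1 - \<gamma> * sqrt ((1 + \<mu> / lcs\<^sup>2) / (1 + \<mu> / ucs\<^sup>2)) > 0"
  shows "let \<alpha>\<^sub>1 = (1 + \<mu> / lcs\<^sup>2) / (1 + \<mu> / ucs\<^sup>2);
             \<alpha>\<^sub>2 = 1 - \<gamma> * sqrt \<alpha>\<^sub>1;
             \<alpha>\<^sub>3 = 4 * ucs\<^sup>2 * ues\<^sup>2 * (B + 2) * L * (lcs\<^sup>2 + \<mu>) / (\<mu> * lcs\<^sup>2 * les\<^sup>2);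
             \<alpha>\<^sub>4 = \<alpha>\<^sub>3 / (2 * (B + 2))
         in AE \<omega> in M.
              real_cond_exp M (hist M x w k) (\<lambda>\<omega>. moreau Nc Ns \<mu> (x (Suc k) \<omega> - xstar)) \<omega>
              \<le> (1 - 2 * \<alpha>\<^sub>2 * \<epsilon> k + \<alpha>\<^sub>3 * (\<epsilon> k)\<^sup>2) * moreau Nc Ns \<mu> (x k \<omega> - xstar)
                 + \<alpha>\<^sub>4 * (A + 2 * B * (Nc xstar)\<^sup>2) / (2 * (1 + \<mu> / lcs\<^sup>2)) * (\<epsilon> k)\<^sup>2"
proof -
  interpret P: prob_space M by (rule P)
  interpret stoch_approx Nc Ns \<mu> lcs ucs L Ne H \<gamma> A B les ues xstar x0 M x w \<epsilon>
    by (unfold_locales; (rule assms)?)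
       (use bnds(5) gamma(2) AB eps_pos P.sigma_finite_countable P.emeasure_space_1
          in \<open>simp_all add: less_imp_le\<close>)
  show ?thesis
    using cond_exp_moreau_bound unfolding Let_def alpha1_def alpha2_def alpha3_def alpha4_def .
qed

end
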